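(* Let $\epsilon>0$ (or any complex $\epsilon$), $n\in\mathbb{Z}$, and $\vec n=(n,\dots,n)\in\mathbb{Z}^k$. Then $$(\epsilon-z_2)(\epsilon-z_3)\cdots(\epsilon-z_k)\ \overset{\vec n}{\approx}\ \sum_{i=0}^{k-1}c_\epsilon(k,i)(\epsilon-z_1)\cdots(\epsilon-z_i),\qquad c_\epsilon(k,i)=\epsilon^{k-i-1}q^i\frac{(q;q)_{k-1}}{(q;q)_i},$$ where the $i=0$ term of the product is $1$.
   Context: Fix $q\in(0,1)$, $k\ge1$; $(a;q)_n=\prod_{i=0}^{n-1}(1-q^ia)$. For $\vec n\in\mathbb{Z}^k$ and two functions $f,g:\mathbb{C}^k\to\mathbb{C}$, write $f\overset{\vec n}{\approx}g$ if, identically in $\vec z$ (as rational functions), $$\sum_{\sigma\in S_k}\prod_{1\le B<A\le k}\frac{z_{\sigma(A)}-q^{-1}z_{\sigma(B)}}{z_{\sigma(A)}-z_{\sigma(B)}}\prod_{j=1}^k(\epsilon-z_{\sigma(j)})^{n_j}\Big(f(z_{\sigma(1)},\dots,z_{\sigma(k)})-g(z_{\sigma(1)},\dots,z_{\sigma(k)})\Big)=0.$$ *)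

theory Defs
  imports Complex_Main "HOL-Combinatorics.Permutations"
begin

definition qpoch :: "complex \<Rightarrow> complex \<Rightarrow> nat \<Rightarrow> complex" where
  "qpoch a q n = (\<Prod>i<n. 1 - q ^ i * a)"

text \<open>Variables are indexed 1..k (z :: nat => complex, only
  z 1, ..., z k matter). Identity "as rational functions" is rendered as equality at every
  point where the expression is defined: pairwise distinct coordinates, and (if some
  exponent is negative) all coordinates different from eps.\<close>
definition qapprox ::
  "real \<Rightarrow> complex \<Rightarrow> nat \<Rightarrow> (nat \<Rightarrow> int) \<Rightarrow> ((nat \<Rightarrow> complex) \<Rightarrow> complex)
     \<Rightarrow> ((nat \<Rightarrow> complex) \<Rightarrow> complex) \<Rightarrow> bool" where
  "qapprox q eps k ns f g \<longleftrightarrow>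
     (\<forall>z :: nat \<Rightarrow> complex.
        (\<forall>i\<in>{1..k}. \<forall>j\<in>{1..k}. i \<noteq> j \<longrightarrow> z i \<noteq> z j) \<longrightarrow>
        ((\<exists>j\<in>{1..k}. ns j < 0) \<longrightarrow> (\<forall>i\<in>{1..k}. z i \<noteq> eps)) \<longrightarrow>
        (\<Sum>\<sigma>\<in>{\<sigma>. \<sigma> permutes {1..k}}.
            (\<Prod>A\<in>{1..k}. \<Prod>B\<in>{1..<A}.
                (z (\<sigma> A) - inverse (complex_of_real q) * z (\<sigma> B)) / (z (\<sigma> A) - z (\<sigma> B)))
          * (\<Prod>j\<in>{1..k}. (eps - z (\<sigma> j)) powi ns j)
          * (f (z \<circ> \<sigma>) - g (z \<circ> \<sigma>))) = 0)"

end

theory Submission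
  imports Defs
begin

text \<open>The exponent factor \<open>\<Prod>(\<epsilon> - z\<^sub>j)^n\<close> is symmetric and factors out, so it
  suffices to show that the \<open>q\<close>-symmetrization annihilates the difference of the two sides.
  With \<open>Q = q\<close>, it annihilates \<open>(Q z\<^sub>t - z\<^sub>t\<^sub>+\<^sub>1) g\<close> whenever \<open>g\<close> is invariant under swapping
  \<open>z\<^sub>t\<close> and \<open>z\<^sub>t\<^sub>+\<^sub>1\<close>, because the summands for \<open>\<sigma>\<close> and \<open>\<sigma>\<close> composed with that swap
  cancel. Telescoping, \<open>z\<^sub>a\<^sub>+\<^sub>d\<close> may be replaced by \<open>Q^d z\<^sub>a\<close> in front of any factor
  symmetric in \<open>z\<^sub>a, \<dots>, z\<^sub>a\<^sub>+\<^sub>d\<close>. By induction on \<open>m\<close>: multiply the identity for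
  \<open>\<Prod>\<^sub>j\<^sub>=\<^sub>2\<^sup>m (\<epsilon> - z\<^sub>j)\<close> by \<open>\<epsilon> - z\<^sub>m\<^sub>+\<^sub>1\<close>, which is symmetric in \<open>z\<^sub>1, \<dots>, z\<^sub>m\<close>,
  and in the \<open>i\<close>-th term replace \<open>z\<^sub>m\<^sub>+\<^sub>1\<close> by \<open>Q^(m-i) z\<^sub>i\<^sub>+\<^sub>1\<close>; the coefficients
  \<open>c(m, i)\<close> satisfy exactly the resulting \<open>q\<close>-Pascal recurrence.\<close>

definition qweight :: "complex \<Rightarrow> nat \<Rightarrow> (nat \<Rightarrow> complex) \<Rightarrow> (nat \<Rightarrow> nat) \<Rightarrow> complex" where
  "qweight Q k z \<sigma> =
     (\<Prod>A\<in>{1..k}. \<Prod>B\<in>{1..<A}. (z (\<sigma> A) - inverse Q * z (\<sigma> B)) / (z (\<sigma> A) - z (\<sigma> B)))"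

definition qsym :: "complex \<Rightarrow> nat \<Rightarrow> ((nat \<Rightarrow> complex) \<Rightarrow> complex) \<Rightarrow> (nat \<Rightarrow> complex) \<Rightarrow> complex" where
  "qsym Q k h z = (\<Sum>\<sigma> | \<sigma> permutes {1..k}. qweight Q k z \<sigma> * h (z \<circ> \<sigma>))"

definition qsym_null :: "complex \<Rightarrow> nat \<Rightarrow> ((nat \<Rightarrow> complex) \<Rightarrow> complex) \<Rightarrow> bool" where
  "qsym_null Q k h \<longleftrightarrow> (\<forall>z. inj_on z {1..k} \<longrightarrow> qsym Q k h z = 0)"

lemma qsym_add: "qsym Q k (\<lambda>x. h1 x + h2 x) z = qsym Q k h1 z + qsym Q k h2 z"
  unfolding qsym_def by (simp add: distrib_left sum.distrib)

lemma qsym_scale: "qsym Q k (\<lambda>x. c * h x) z = c * qsym Q k h z"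
  unfolding qsym_def by (simp add: sum_distrib_left mult.left_commute)

lemma qsym_null_add: "qsym_null Q k h1 \<Longrightarrow> qsym_null Q k h2 \<Longrightarrow> qsym_null Q k (\<lambda>x. h1 x + h2 x)"
  by (simp add: qsym_null_def qsym_add)

lemma qsym_null_scale: "qsym_null Q k h \<Longrightarrow> qsym_null Q k (\<lambda>x. c * h x)"
  by (simp add: qsym_null_def qsym_scale)

lemma qapprox_const_exponent_if_qsym_null:
  assumes "qsym_null (complex_of_real q) k (\<lambda>w. f w - g w)"
  shows "qapprox q eps k (\<lambda>_. n) f g"
  unfolding qapprox_def
proof (intro allI impI)
  fix z :: "nat \<Rightarrow> complex"
  assume "\<forall>i\<in>{1..k}. \<forall>j\<in>{1..k}. i \<noteq> j \<longrightarrow> z i \<noteq> z j"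
  then have inj: "inj_on z {1..k}"
    by (meson inj_onI)
  have sym: "(\<Prod>j\<in>{1..k}. (eps - z (\<sigma> j)) powi n) = (\<Prod>j\<in>{1..k}. (eps - z j) powi n)"
    if "\<sigma> permutes {1..k}" for \<sigma>
    using prod.permute[OF that, of "\<lambda>j. (eps - z j) powi n"] by (simp add: o_def)
  have "(\<Sum>\<sigma>\<in>{\<sigma>. \<sigma> permutes {1..k}}.
          (\<Prod>A\<in>{1..k}. \<Prod>B\<in>{1..<A}.
             (z (\<sigma> A) - inverse (complex_of_real q) * z (\<sigma> B)) / (z (\<sigma> A) - z (\<sigma> B)))
          * (\<Prod>j\<in>{1..k}. (eps - z (\<sigma> j)) powi n) * (f (z \<circ> \<sigma>) - g (z \<circ> \<sigma>)))
      = (\<Prod>j\<in>{1..k}. (eps - z j) powi n) * qsym (complex_of_real q) k (\<lambda>w. f w - g w) z"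
    unfolding qsym_def qweight_def sum_distrib_left
    by (intro sum.cong refl) (subst sym, simp_all add: mult_ac)
  also have "\<dots> = 0"
    using assms inj by (simp add: qsym_null_def)
  finally show "(\<Sum>\<sigma>\<in>{\<sigma>. \<sigma> permutes {1..k}}.
          (\<Prod>A\<in>{1..k}. \<Prod>B\<in>{1..<A}.
             (z (\<sigma> A) - inverse (complex_of_real q) * z (\<sigma> B)) / (z (\<sigma> A) - z (\<sigma> B)))
          * (\<Prod>j\<in>{1..k}. (eps - z (\<sigma> j)) powi n) * (f (z \<circ> \<sigma>) - g (z \<circ> \<sigma>))) = 0" .
qed

lemma prod_lower_pairs_transpose:
  fixes G :: "nat \<Rightarrow> nat \<Rightarrow> 'a::comm_monoid_mult"
  assumes "1 \<le> t" "t < k"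
  obtains R where "(\<Prod>A\<in>{1..k}. \<Prod>B\<in>{1..<A}. G A B) = G (Suc t) t * R"
    and "(\<Prod>A\<in>{1..k}. \<Prod>B\<in>{1..<A}.
           G (Transposition.transpose t (Suc t) A) (Transposition.transpose t (Suc t) B))
         = G t (Suc t) * R"
proof -
  define s where "s = Transposition.transpose t (Suc t)"
  define P where "P = (SIGMA A:{1..k}. {1..<A})"
  define Q where "Q = P - {(Suc t, t)}"
  have nested: "(\<Prod>A\<in>{1..k}. \<Prod>B\<in>{1..<A}. H A B) = (\<Prod>(A, B)\<in>P. H A B)" for H :: "nat \<Rightarrow> nat \<Rightarrow> 'a"
    unfolding P_def by (rule prod.Sigma) auto
  have fin: "finite P" and mem: "(Suc t, t) \<in> P"
    using assms by (auto simp: P_def)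
  let ?h = "\<lambda>(A, B). (s A, s B)"
  have "bij_betw ?h Q Q"
    by (rule bij_betw_byWitness[where f' = ?h])
      (use assms in \<open>auto simp: Q_def P_def s_def transpose_def split: if_splits\<close>)
  then have "(\<Prod>(A, B)\<in>Q. G (s A) (s B)) = (\<Prod>(A, B)\<in>Q. G A B)"
    using prod.reindex_bij_betw[of ?h Q Q "\<lambda>(A, B). G A B"] by (simp add: case_prod_beta)
  moreover have "(\<Prod>(A, B)\<in>P. H A B) = H (Suc t) t * (\<Prod>(A, B)\<in>Q. H A B)" for H :: "nat \<Rightarrow> nat \<Rightarrow> 'a"
    unfolding Q_def using prod.remove[OF fin mem, of "\<lambda>(A, B). H A B"] by simp
  ultimately show thesis
    using that[of "\<Prod>(A, B)\<in>Q. G A B"] unfolding nested s_def[symmetric]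
    by (simp add: s_def)
qed

lemma qweight_transpose:
  assumes Q: "Q \<noteq> 0" and \<sigma>: "\<sigma> permutes {1..k}" and z: "inj_on z {1..k}"
    and t: "1 \<le> t" "t < k"
  shows "qweight Q k z (\<sigma> \<circ> Transposition.transpose t (Suc t)) * (Q * z (\<sigma> (Suc t)) - z (\<sigma> t))
       = - (qweight Q k z \<sigma> * (Q * z (\<sigma> t) - z (\<sigma> (Suc t))))"
proof -
  define f where "f = (\<lambda>a b. (a - inverse Q * b) / (a - b))"
  obtain R where R: "qweight Q k z \<sigma> = f (z (\<sigma> (Suc t))) (z (\<sigma> t)) * R"
    and Rs: "qweight Q k z (\<sigma> \<circ> Transposition.transpose t (Suc t)) = f (z (\<sigma> t)) (z (\<sigma> (Suc t))) * R"
    using prod_lower_pairs_transpose[OF t, of "\<lambda>A B. f (z (\<sigma> A)) (z (\<sigma> B))"]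
    unfolding qweight_def f_def by auto
  have "\<sigma> t \<noteq> \<sigma> (Suc t)" "\<sigma> t \<in> {1..k}" "\<sigma> (Suc t) \<in> {1..k}"
    using t permutes_inj[OF \<sigma>] permutes_in_image[OF \<sigma>] by (auto dest: injD)
  then have "z (\<sigma> t) \<noteq> z (\<sigma> (Suc t))"
    using z by (auto dest: inj_onD)
  then show ?thesis
    unfolding R Rs f_def using Q by (simp add: field_simps)
qed

definition swap_invariant :: "nat \<Rightarrow> ((nat \<Rightarrow> complex) \<Rightarrow> complex) \<Rightarrow> bool" where
  "swap_invariant t g \<longleftrightarrow> (\<forall>x. g (x \<circ> Transposition.transpose t (Suc t)) = g x)"

lemma qsym_null_swap_factor:
  assumes Q: "Q \<noteq> 0" and t: "1 \<le> t" "t < k" and g: "swap_invariant t g"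
  shows "qsym_null Q k (\<lambda>x. (Q * x t - x (Suc t)) * g x)"
  unfolding qsym_null_def
proof (intro allI impI)
  fix z :: "nat \<Rightarrow> complex"
  assume z: "inj_on z {1..k}"
  define s where "s = Transposition.transpose t (Suc t)"
  have s: "s permutes {1..k}"
    unfolding s_def using t by (intro permutes_swap_id) auto
  define T where "T = (\<lambda>\<sigma>. qweight Q k z \<sigma> * ((Q * z (\<sigma> t) - z (\<sigma> (Suc t))) * g (z \<circ> \<sigma>)))"
  have T_swap: "T (\<sigma> \<circ> s) = - T \<sigma>" if "\<sigma> permutes {1..k}" for \<sigma>
  proof -
    have "g (z \<circ> (\<sigma> \<circ> s)) = g (z \<circ> \<sigma>)"
      using g unfolding swap_invariant_def s_def by (simp add: o_assoc)
    moreover have "s t = Suc t" "s (Suc t) = t"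
      by (simp_all add: s_def)
    ultimately show ?thesis
      using qweight_transpose[OF Q that z t] unfolding T_def s_def[symmetric]
      by (simp add: mult.assoc[symmetric])
  qed
  have "(\<Sum>\<sigma> | \<sigma> permutes {1..k}. T \<sigma>) = (\<Sum>\<sigma> | \<sigma> permutes {1..k}. T (\<sigma> \<circ> s))"
    by (rule sum_permutations_compose_right[OF s])
  also have "\<dots> = - (\<Sum>\<sigma> | \<sigma> permutes {1..k}. T \<sigma>)"
    by (simp add: T_swap sum_negf)
  finally have "(\<Sum>\<sigma> | \<sigma> permutes {1..k}. T \<sigma>) = 0"
    by simp
  then show "qsym Q k (\<lambda>x. (Q * x t - x (Suc t)) * g x) z = 0"
    by (simp add: qsym_def T_def)
qed

text \<open>The induction needs an annihilation property that survives multiplication by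
  functions symmetric in \<open>x 1, \<dots>, x m\<close>.\<close>
definition qsym_null_upto :: "complex \<Rightarrow> nat \<Rightarrow> nat \<Rightarrow> ((nat \<Rightarrow> complex) \<Rightarrow> complex) \<Rightarrow> bool" where
  "qsym_null_upto Q k m h \<longleftrightarrow>
     (\<forall>\<phi>. (\<forall>t\<in>{1..<m}. swap_invariant t \<phi>) \<longrightarrow> qsym_null Q k (\<lambda>x. h x * \<phi> x))"

lemma qsym_null_upto_add:
  "qsym_null_upto Q k m h1 \<Longrightarrow> qsym_null_upto Q k m h2 \<Longrightarrow> qsym_null_upto Q k m (\<lambda>x. h1 x + h2 x)"
  unfolding qsym_null_upto_def by (simp add: distrib_right qsym_null_add)

lemma qsym_null_upto_scale: "qsym_null_upto Q k m h \<Longrightarrow> qsym_null_upto Q k m (\<lambda>x. c * h x)"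
  unfolding qsym_null_upto_def using qsym_null_scale by (fastforce simp: mult.assoc)

lemma qsym_null_upto_zero: "qsym_null_upto Q k m (\<lambda>x. 0)"
  by (simp add: qsym_null_upto_def qsym_null_def qsym_def)

lemma qsym_null_upto_sum:
  "finite I \<Longrightarrow> (\<And>i. i \<in> I \<Longrightarrow> qsym_null_upto Q k m (h i))
    \<Longrightarrow> qsym_null_upto Q k m (\<lambda>x. \<Sum>i\<in>I. h i x)"
  by (induction I rule: finite_induct) (auto intro: qsym_null_upto_add qsym_null_upto_zero)

lemma qsym_null_upto_mono: "qsym_null_upto Q k m h \<Longrightarrow> m \<le> m' \<Longrightarrow> qsym_null_upto Q k m' h"
  unfolding qsym_null_upto_def by auto

lemma qsym_null_upto_imp_qsym_null: "qsym_null_upto Q k m h \<Longrightarrow> qsym_null Q k h"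
  unfolding qsym_null_upto_def swap_invariant_def by (drule spec[of _ "\<lambda>x. 1"]) simp

lemma swap_invariant_mult:
  "swap_invariant t \<phi> \<Longrightarrow> swap_invariant t \<psi> \<Longrightarrow> swap_invariant t (\<lambda>x. \<phi> x * \<psi> x)"
  by (simp add: swap_invariant_def)

lemma swap_invariant_prod_eps_minus:
  assumes "t \<notin> S" "Suc t \<notin> S"
  shows "swap_invariant t (\<lambda>x. \<Prod>j\<in>S. eps - x j)"
  unfolding swap_invariant_def
  by (intro allI prod.cong refl) (use assms in \<open>auto simp: transpose_def\<close>)

lemma qsym_null_upto_mult:
  assumes "qsym_null_upto Q k m h" and "\<And>t. t \<in> {1..<m} \<Longrightarrow> swap_invariant t \<psi>"
  shows "qsym_null_upto Q k m (\<lambda>x. h x * \<psi> x)"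
  unfolding qsym_null_upto_def
proof (intro allI impI)
  fix \<phi> assume "\<forall>t\<in>{1..<m}. swap_invariant t \<phi>"
  then have "\<forall>t\<in>{1..<m}. swap_invariant t (\<lambda>x. \<psi> x * \<phi> x)"
    using assms(2) swap_invariant_mult by blast
  then have "qsym_null Q k (\<lambda>x. h x * (\<psi> x * \<phi> x))"
    using assms(1) unfolding qsym_null_upto_def by blast
  then show "qsym_null Q k (\<lambda>x. h x * \<psi> x * \<phi> x)"
    by (simp add: mult.assoc)
qed

lemma qsym_null_upto_swap_factor:
  assumes "Q \<noteq> 0" "1 \<le> t" "t < k" "t < m" and "swap_invariant t g"
  shows "qsym_null_upto Q k m (\<lambda>x. (Q * x t - x (Suc t)) * g x)"
  unfolding qsym_null_upto_def
proof (intro allI impI)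
  fix \<phi> assume "\<forall>t\<in>{1..<m}. swap_invariant t \<phi>"
  then have "swap_invariant t (\<lambda>x. g x * \<phi> x)"
    using assms by (simp add: swap_invariant_mult)
  from qsym_null_swap_factor[OF assms(1-3) this]
  show "qsym_null Q k (\<lambda>x. (Q * x t - x (Suc t)) * g x * \<phi> x)"
    by (simp add: mult.assoc)
qed

lemma qsym_null_upto_power_factor:
  assumes Q: "Q \<noteq> 0" and a: "1 \<le> a" "a + d \<le> k"
    and g: "\<And>t. a \<le> t \<Longrightarrow> t < a + d \<Longrightarrow> swap_invariant t g"
  shows "qsym_null_upto Q k (a + d) (\<lambda>x. (Q ^ d * x a - x (a + d)) * g x)"
  using a g
proof (induction d)
  case 0
  then show ?case
    using qsym_null_upto_zero by simp
next
  case (Suc d)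
  have IH: "qsym_null_upto Q k (Suc (a + d)) (\<lambda>x. (Q ^ d * x a - x (a + d)) * g x)"
    using Suc by (intro qsym_null_upto_mono[OF Suc.IH]) auto
  have step: "qsym_null_upto Q k (Suc (a + d)) (\<lambda>x. (Q * x (a + d) - x (Suc (a + d))) * g x)"
    using Suc.prems by (intro qsym_null_upto_swap_factor[OF Q]) auto
  have "(Q ^ Suc d * x a - x (a + Suc d)) * g x
      = (Q * x (a + d) - x (Suc (a + d))) * g x + Q * ((Q ^ d * x a - x (a + d)) * g x)" for x
    by (simp add: algebra_simps)
  then show ?case
    using qsym_null_upto_add[OF step qsym_null_upto_scale[OF IH]] by simp
qed

text \<open>For \<open>i < m\<close> this is the coefficient \<open>\<epsilon>^(m-i-1) Q^i (Q;Q)_(m-1) / (Q;Q)_i\<close> with the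
  quotient of \<open>q\<close>-Pochhammer symbols cancelled.\<close>
definition qcoeff :: "complex \<Rightarrow> complex \<Rightarrow> nat \<Rightarrow> nat \<Rightarrow> complex" where
  "qcoeff Q eps m i = eps ^ (m - i - 1) * Q ^ i * (\<Prod>j\<in>{Suc i..<m}. 1 - Q ^ j)"

lemma qcoeff_Suc:
  assumes "1 \<le> m" "i \<le> m"
  shows "qcoeff Q eps (Suc m) i
       = (if i = 0 then 0 else qcoeff Q eps m (i - 1) * Q ^ (Suc m - i))
         + qcoeff Q eps m i * (1 - Q ^ (m - i)) * eps"
proof (cases "i = m")
  case True
  with assms obtain j where "m = Suc j" "i = Suc j"
    by (cases m) auto
  then show ?thesis
    by (simp add: qcoeff_def)
next
  case False
  with assms obtain r where m: "m = Suc (i + r)"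
    by (metis le_neq_implies_less less_iff_Suc_add add.commute add_Suc)
  define P where "P = (\<Prod>j\<in>{Suc i..<m}. 1 - Q ^ j)"
  have P_Suc: "(\<Prod>j\<in>{Suc i..<Suc m}. 1 - Q ^ j) = P * (1 - Q ^ m)"
    unfolding P_def using m by (simp add: prod.atLeastLessThan_Suc)
  show ?thesis
  proof (cases i)
    case 0
    then show ?thesis
      using P_Suc unfolding qcoeff_def P_def m by (simp add: algebra_simps)
  next
    case (Suc j)
    have P_pred: "(\<Prod>j\<in>{i..<m}. 1 - Q ^ j) = (1 - Q ^ i) * P"
      unfolding P_def using m by (intro prod.atLeast_Suc_lessThan) simp
    have exps: "Suc m - i - 1 = Suc r" "m - j - 1 = Suc r" "Suc m - i = Suc (Suc r)"
      "m - i - 1 = r" "m - i = Suc r" "Q ^ m = Q * Q * Q ^ j * Q ^ r" "Q ^ i = Q * Q ^ j"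
      unfolding m Suc by (simp_all add: power_add)
    have lhs: "qcoeff Q eps (Suc m) i = eps * eps ^ r * (Q * Q ^ j) * (P * (1 - Q * Q * Q ^ j * Q ^ r))"
      unfolding qcoeff_def P_Suc exps by simp
    have rhs1: "qcoeff Q eps m j * Q ^ (Suc m - i)
        = eps * eps ^ r * Q ^ j * ((1 - Q * Q ^ j) * P) * (Q * Q * Q ^ r)"
      unfolding qcoeff_def Suc[symmetric] P_pred exps by simp
    have rhs2: "qcoeff Q eps m i * (1 - Q ^ (m - i)) * eps = eps ^ r * (Q * Q ^ j) * P * (1 - Q * Q ^ r) * eps"
      unfolding qcoeff_def P_def[symmetric] exps by simp
    have "qcoeff Q eps (Suc m) i = qcoeff Q eps m j * Q ^ (Suc m - i) + qcoeff Q eps m i * (1 - Q ^ (m - i)) * eps"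
      unfolding lhs rhs1 rhs2 by algebra
    then show ?thesis
      using Suc by simp
  qed
qed

lemma qcoeff_sum_Suc:
  assumes "1 \<le> m"
  shows "(\<Sum>i<m. qcoeff Q eps m i * (Q ^ (m - i) * U (Suc i) + (1 - Q ^ (m - i)) * eps * U i))
       = (\<Sum>i<Suc m. qcoeff Q eps (Suc m) i * U i)"
proof -
  have "(\<Sum>i<Suc m. qcoeff Q eps (Suc m) i * U i)
      = (\<Sum>i<Suc m. (if i = 0 then 0 else qcoeff Q eps m (i - 1) * Q ^ (Suc m - i)) * U i)
        + (\<Sum>i<Suc m. qcoeff Q eps m i * (1 - Q ^ (m - i)) * eps * U i)"
    using assms by (simp add: qcoeff_Suc distrib_right sum.distrib)
  also have "(\<Sum>i<Suc m. (if i = 0 then 0 else qcoeff Q eps m (i - 1) * Q ^ (Suc m - i)) * U i)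
      = (\<Sum>i<m. qcoeff Q eps m i * Q ^ (m - i) * U (Suc i))"
    by (subst sum.lessThan_Suc_shift) simp
  also have "(\<Sum>i<Suc m. qcoeff Q eps m i * (1 - Q ^ (m - i)) * eps * U i)
      = (\<Sum>i<m. qcoeff Q eps m i * (1 - Q ^ (m - i)) * eps * U i)"
    by simp
  also have "(\<Sum>i<m. qcoeff Q eps m i * Q ^ (m - i) * U (Suc i))
      + (\<Sum>i<m. qcoeff Q eps m i * (1 - Q ^ (m - i)) * eps * U i)
      = (\<Sum>i<m. qcoeff Q eps m i * Q ^ (m - i) * U (Suc i) + qcoeff Q eps m i * (1 - Q ^ (m - i)) * eps * U i)"
    by (rule sum.distrib[symmetric])
  finally show ?thesis
    by (simp add: distrib_left mult.assoc)
qed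

lemma qsym_null_upto_prod_eps_minus:
  assumes Q: "Q \<noteq> 0" and m: "1 \<le> m" "m \<le> k"
  shows "qsym_null_upto Q k m
           (\<lambda>x. (\<Prod>j\<in>{2..m}. eps - x j) - (\<Sum>i<m. qcoeff Q eps m i * (\<Prod>j\<in>{1..i}. eps - x j)))"
  using m
proof (induction m rule: nat_induct_at_least)
  case base
  then show ?case
    using qsym_null_upto_zero by (simp add: qcoeff_def)
next
  case (Suc m)
  define U where "U x i = (\<Prod>j\<in>{1..i}. eps - x j)" for x :: "nat \<Rightarrow> complex" and i :: nat
  define D where "D x = (\<Prod>j\<in>{2..m}. eps - x j) - (\<Sum>i<m. qcoeff Q eps m i * U x i)" for x
  have "qsym_null_upto Q k m D"
    using Suc unfolding D_def U_def by simp
  then have shifted: "qsym_null_upto Q k (Suc m) (\<lambda>x. D x * (eps - x (Suc m)))"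
    by (intro qsym_null_upto_mono[OF qsym_null_upto_mult]) (auto simp: swap_invariant_def)
  have "qsym_null_upto Q k (Suc i + (m - i)) (\<lambda>x. (Q ^ (m - i) * x (Suc i) - x (Suc i + (m - i))) * U x i)"
    if "i < m" for i
    using Suc.hyps Suc.prems that unfolding U_def
    by (intro qsym_null_upto_power_factor[OF Q] swap_invariant_prod_eps_minus) auto
  then have "qsym_null_upto Q k (Suc m)
      (\<lambda>x. \<Sum>i<m. qcoeff Q eps m i * ((Q ^ (m - i) * x (Suc i) - x (Suc m)) * U x i))"
    by (intro qsym_null_upto_sum qsym_null_upto_scale) auto
  from qsym_null_upto_add[OF shifted this]
  have "qsym_null_upto Q k (Suc m) (\<lambda>x. D x * (eps - x (Suc m))
      + (\<Sum>i<m. qcoeff Q eps m i * ((Q ^ (m - i) * x (Suc i) - x (Suc m)) * U x i)))" .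
  moreover have "D x * (eps - x (Suc m))
      + (\<Sum>i<m. qcoeff Q eps m i * ((Q ^ (m - i) * x (Suc i) - x (Suc m)) * U x i))
      = (\<Prod>j\<in>{2..Suc m}. eps - x j) - (\<Sum>i<Suc m. qcoeff Q eps (Suc m) i * U x i)" for x
  proof -
    have U_Suc: "U x (Suc i) = U x i * (eps - x (Suc i))" for i
      by (simp add: U_def)
    have "(\<Sum>i<m. qcoeff Q eps m i * ((Q ^ (m - i) * x (Suc i) - x (Suc m)) * U x i))
        = (\<Sum>i<m. qcoeff Q eps m i * U x i) * (eps - x (Suc m))
          - (\<Sum>i<m. qcoeff Q eps m i * (Q ^ (m - i) * U x (Suc i) + (1 - Q ^ (m - i)) * eps * U x i))"
      unfolding sum_distrib_right sum_subtractf[symmetric] U_Suc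
      by (intro sum.cong refl) (simp add: algebra_simps)
    moreover have "(\<Prod>j\<in>{2..Suc m}. eps - x j) = (\<Prod>j\<in>{2..m}. eps - x j) * (eps - x (Suc m))"
      using Suc.hyps by (simp add: prod.cl_ivl_Suc)
    ultimately show ?thesis
      unfolding D_def qcoeff_sum_Suc[OF Suc.hyps] by (simp add: algebra_simps)
  qed
  ultimately show ?case
    unfolding U_def by simp
qed

lemma qpoch_self_eq_prod: "qpoch Q Q n = (\<Prod>j\<in>{1..n}. 1 - Q ^ j)"
  using prod.atLeast1_atMost_eq[of "\<lambda>j. 1 - Q ^ j" n] by (simp add: qpoch_def mult.commute)

lemma qpoch_self_quotient:
  assumes "qpoch Q Q i \<noteq> 0" "i < m"
  shows "qpoch Q Q (m - 1) / qpoch Q Q i = (\<Prod>j\<in>{Suc i..<m}. 1 - Q ^ j)"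
proof -
  have "qpoch Q Q (m - 1) = (\<Prod>j\<in>{1..<m}. 1 - Q ^ j)"
    using assms(2) by (simp add: qpoch_self_eq_prod atLeastLessThanSuc_atLeastAtMost[symmetric])
  also have "\<dots> = qpoch Q Q i * (\<Prod>j\<in>{Suc i..<m}. 1 - Q ^ j)"
    using assms(2) prod.atLeastLessThan_concat[of 1 "Suc i" m "\<lambda>j. 1 - Q ^ j"]
    by (simp add: qpoch_self_eq_prod atLeastLessThanSuc_atLeastAtMost)
  finally show ?thesis
    using assms(1) by simp
qed

lemma qpoch_of_real_nonzero:
  assumes "0 < q" "q < 1"
  shows "qpoch (complex_of_real q) (complex_of_real q) n \<noteq> 0"
proof -
  have "q ^ Suc j < 1" for j
    using assms by (rule power_Suc_less_one)
  then have "1 - complex_of_real q ^ j * complex_of_real q \<noteq> 0" for j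
    by (metis eq_iff_diff_eq_0 of_real_eq_1_iff of_real_power power_Suc2 less_irrefl)
  then show ?thesis
    by (simp add: qpoch_def)
qed

theorem lemma6p6:
  fixes q :: real and k :: nat and eps :: complex and n :: int
  assumes "0 < q" and "q < 1" and "1 \<le> k"
  shows "qapprox q eps k (\<lambda>_. n)
           (\<lambda>w. \<Prod>j\<in>{2..k}. eps - w j)
           (\<lambda>w. \<Sum>i\<in>{0..k-1}.
                 (eps ^ (k - i - 1) * complex_of_real q ^ i
                   * qpoch (complex_of_real q) (complex_of_real q) (k - 1)
                   / qpoch (complex_of_real q) (complex_of_real q) i)
                 * (\<Prod>j\<in>{1..i}. eps - w j))"
proof (rule qapprox_const_exponent_if_qsym_null)
  let ?Q = "complex_of_real q"
  have coeff: "eps ^ (k - i - 1) * ?Q ^ i * qpoch ?Q ?Q (k - 1) / qpoch ?Q ?Q i = qcoeff ?Q eps k i"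
    if "i \<in> {0..k-1}" for i
  proof -
    have "i < k"
      using that assms(3) by auto
    then show ?thesis
      using qpoch_self_quotient[OF qpoch_of_real_nonzero[OF assms(1,2)]]
      unfolding qcoeff_def times_divide_eq_right[symmetric] by simp
  qed
  have "{0..k-1} = {..<k}"
    using assms(3) by auto
  moreover have "qsym_null ?Q k
      (\<lambda>w. (\<Prod>j\<in>{2..k}. eps - w j) - (\<Sum>i<k. qcoeff ?Q eps k i * (\<Prod>j\<in>{1..i}. eps - w j)))"
    using assms by (intro qsym_null_upto_imp_qsym_null[OF qsym_null_upto_prod_eps_minus]) auto
  ultimately show "qsym_null ?Q k (\<lambda>w. (\<Prod>j\<in>{2..k}. eps - w j) - (\<Sum>i\<in>{0..k-1}.
                 (eps ^ (k - i - 1) * ?Q ^ i * qpoch ?Q ?Q (k - 1) / qpoch ?Q ?Q i)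
                 * (\<Prod>j\<in>{1..i}. eps - w j)))"
    using coeff by simp
qed

end
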